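(* Assume (H1), fix $\theta_0\in(0,2)$ and $x,y\in\mathbb{R}^d$, and let $\zeta$ and $(X_t,Y_t)_{t\in[0,T)}$ be as in the context. Then almost surely, for every $s_0\in[0,T)$, $$\int_0^{s_0}\frac{|X_t-Y_t|^2}{\zeta^4(t)}dt+\frac{|X_{s_0}-Y_{s_0}|^2}{\theta_0\,\zeta^3(s_0)}\le\frac{|x-y|^2}{\theta_0\,\zeta^3(0)}.$$
   Context: Fix $T>0$, $H\in(1/2,1)$; $B^H$ is a $d$-dimensional fractional Brownian motion with Hurst parameter $H$. SDE: $dX_t=b(t,X_t)dt+\sigma(t)dB^H_t$, $X_0=x$, with $b:[0,T]\times\mathbb{R}^d\to\mathbb{R}^d$, $\sigma:[0,T]\to$ invertible $d\times d$ matrices. Assumption (H1): (i) there is $K>0$ with $|b(t,x)-b(t,y)|\le K|x-y|$ for all $t,x,y$, and $t\mapsto b(t,x)$ is Lipschitz for each $x$; (ii) $\sigma$ is bounded and $|\sigma^{-1}(t)-\sigma^{-1}(s)|\le\bar K|t-s|^{\alpha_0}$ for some $\bar K\ge0$, $\alpha_0\in(H-1/2,1]$. For $\theta_0\in(0,2)$ set $\zeta(t)=\frac{2-\theta_0}{2K}\big(1-e^{\frac23K(t-T)}\big)$, $t\in[0,T]$. $X$ solves the SDE with $X_0=x$, and $Y$ is the solution on $[0,T)$ of $dY_t=b(t,Y_t)dt+\sigma(t)dB^H_t+\frac{X_t-Y_t}{\zeta(t)}dt$, $Y_0=y$ (driven by the same $B^H$). *)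

theory Defs
  imports "HOL-Probability.Probability"
begin

definition zeta :: "real \<Rightarrow> real \<Rightarrow> real \<Rightarrow> real \<Rightarrow> real" where
  "zeta K theta0 T t = (2 - theta0) / (2 * K) * (1 - exp (2/3 * K * (t - T)))"

definition H1_drift :: "real \<Rightarrow> real \<Rightarrow> (real \<Rightarrow> real^'d \<Rightarrow> real^'d) \<Rightarrow> bool" where
  "H1_drift T K b \<longleftrightarrow> K > 0
     \<and> (\<forall>t\<in>{0..T}. \<forall>u v. norm (b t u - b t v) \<le> K * norm (u - v))
     \<and> (\<forall>u. \<exists>L. \<forall>s\<in>{0..T}. \<forall>t\<in>{0..T}. norm (b t u - b s u) \<le> L * \<bar>t - s\<bar>)"

definition H1_diffusion :: "real \<Rightarrow> real \<Rightarrow> real \<Rightarrow> real \<Rightarrow> (real \<Rightarrow> real^'d^'d) \<Rightarrow> bool" where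
  "H1_diffusion T H Kbar alpha0 \<sigma> \<longleftrightarrow>
       (\<forall>t\<in>{0..T}. invertible (\<sigma> t))
     \<and> (\<exists>C. \<forall>t\<in>{0..T}. norm (\<sigma> t) \<le> C)
     \<and> Kbar \<ge> 0 \<and> H - 1/2 < alpha0 \<and> alpha0 \<le> 1
     \<and> (\<forall>s\<in>{0..T}. \<forall>t\<in>{0..T}.
          norm (matrix_inv (\<sigma> t) - matrix_inv (\<sigma> s)) \<le> Kbar * \<bar>t - s\<bar> powr alpha0)"

end

theory Submission
  imports Defs
begin

(* Since X and Y are driven by the same additive noise, Z = X - Y solves the random ODE
   Z' = b(t,X) - b(t,Y) - Z/zeta, so <Z, Z'> <= (K - 1/zeta) |Z|^2.  The function zeta solves
   zeta' = (2/3) K zeta - (2 - theta0)/3, which is exactly what makes the Lyapunov function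
   int_0^s |Z|^2/zeta^4 + |Z(s)|^2/(theta0 zeta(s)^3) have nonpositive derivative. *)

lemma continuous_on_Lipschitz_drift:
  fixes b :: "real \<Rightarrow> 'a::real_normed_vector \<Rightarrow> 'b::real_normed_vector"
  assumes Lip: "\<forall>t\<in>A. \<forall>p q. norm (b t p - b t q) \<le> K * norm (p - q)"
    and Lip_time: "\<forall>p. \<exists>L. \<forall>s\<in>A. \<forall>t\<in>A. norm (b t p - b s p) \<le> L * \<bar>t - s\<bar>"
    and "S \<subseteq> A" and "continuous_on S w"
  shows "continuous_on S (\<lambda>s. b s (w s))"
  unfolding continuous_on_def
proof
  fix t assume t: "t \<in> S"
  obtain L where L: "\<forall>s\<in>A. \<forall>r\<in>A. norm (b r (w t) - b s (w t)) \<le> L * \<bar>r - s\<bar>"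
    using Lip_time by blast
  have "norm (b s (w s) - b t (w t)) \<le> K * norm (w s - w t) + L * \<bar>s - t\<bar>" if "s \<in> S" for s
  proof (rule norm_diff_triangle_le)
    show "norm (b s (w s) - b s (w t)) \<le> K * norm (w s - w t)"
      using Lip that \<open>S \<subseteq> A\<close> by blast
    show "norm (b s (w t) - b t (w t)) \<le> L * \<bar>s - t\<bar>"
      using L that t \<open>S \<subseteq> A\<close> by blast
  qed
  then have bound: "\<forall>\<^sub>F s in at t within S.
      norm (b s (w s) - b t (w t)) \<le> K * norm (w s - w t) + L * \<bar>s - t\<bar>"
    by (auto simp: eventually_at_filter)
  have "(w \<longlongrightarrow> w t) (at t within S)"
    using \<open>continuous_on S w\<close> t continuous_on_def by blast
  then have majorant_tendsto: "((\<lambda>s. K * norm (w s - w t) + L * \<bar>s - t\<bar>)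
      \<longlongrightarrow> K * norm (w t - w t) + L * \<bar>t - t\<bar>) (at t within S)"
    by (intro tendsto_intros)
  show "((\<lambda>s. b s (w s)) \<longlongrightarrow> b t (w t)) (at t within S)"
    by (rule LIM_zero_cancel, rule Lim_null_comparison[OF bound]) (use majorant_tendsto in simp)
qed

lemma has_vector_derivative_diff_integral_equations:
  fixes g\<^sub>1 g\<^sub>2 n u v :: "real \<Rightarrow> 'a::banach"
  assumes "continuous_on {a..b} g\<^sub>1" "continuous_on {a..b} g\<^sub>2"
    and "\<forall>s\<in>{a..b}. u s = x + integral {a..s} g\<^sub>1 + n s"
    and "\<forall>s\<in>{a..b}. v s = y + integral {a..s} g\<^sub>2 + n s"
    and t: "t \<in> {a..b}"
  shows "((\<lambda>s. u s - v s) has_vector_derivative g\<^sub>1 t - g\<^sub>2 t) (at t within {a..b})"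
proof (rule has_vector_derivative_transform[OF t])
  have "((\<lambda>s. integral {a..s} g\<^sub>1 - integral {a..s} g\<^sub>2) has_vector_derivative g\<^sub>1 t - g\<^sub>2 t)
      (at t within {a..b})"
    using assms by (intro has_vector_derivative_diff integral_has_vector_derivative) auto
  from has_vector_derivative_add[OF has_vector_derivative_const this]
  show "((\<lambda>s. (x - y) + (integral {a..s} g\<^sub>1 - integral {a..s} g\<^sub>2)) has_vector_derivative g\<^sub>1 t - g\<^sub>2 t)
      (at t within {a..b})"
    by simp
  show "u s - v s = (x - y) + (integral {a..s} g\<^sub>1 - integral {a..s} g\<^sub>2)" if "s \<in> {a..b}" for s
    using assms that by (simp add: algebra_simps)
qed

lemma zeta_pos:
  assumes "K > 0" "theta0 < 2" "t < T"
  shows "zeta K theta0 T t > 0"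
proof -
  have "exp (2/3 * K * (t - T)) < 1"
    using assms by (simp add: mult_pos_neg)
  then show ?thesis
    using assms unfolding zeta_def by (intro mult_pos_pos) auto
qed

lemma zeta_has_real_derivative:
  assumes "K \<noteq> 0"
  shows "(zeta K theta0 T has_real_derivative 2/3 * K * zeta K theta0 T t - (2 - theta0) / 3) (at t)"
proof -
  have "(zeta K theta0 T has_real_derivative
      (2 - theta0) / (2 * K) * (- (exp (2/3 * K * (t - T)) * (2/3 * K)))) (at t)"
    unfolding zeta_def[abs_def] by (auto intro!: derivative_eq_intros)
  moreover have "(2 - theta0) / (2 * K) * (- (exp (2/3 * K * (t - T)) * (2/3 * K)))
      = 2/3 * K * zeta K theta0 T t - (2 - theta0) / 3"
    using assms unfolding zeta_def by (simp add: field_simps)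
  ultimately show ?thesis by simp
qed

lemma weighted_energy_decreasing:
  fixes Z Z' :: "real \<Rightarrow> 'a::real_inner" and z :: "real \<Rightarrow> real"
  assumes "0 \<le> s0" "theta0 > 0"
    and Z_cont: "continuous_on {0..s0} Z" and z_cont: "continuous_on {0..s0} z"
    and z_pos: "\<And>t. t \<in> {0..s0} \<Longrightarrow> z t > 0"
    and Z_deriv: "\<And>t. 0 < t \<Longrightarrow> t < s0 \<Longrightarrow> (Z has_vector_derivative Z' t) (at t)"
    and z_deriv: "\<And>t. 0 < t \<Longrightarrow> t < s0 \<Longrightarrow>
        (z has_real_derivative 2/3 * K * z t - (2 - theta0) / 3) (at t)"
    and dissipation: "\<And>t. 0 < t \<Longrightarrow> t < s0 \<Longrightarrow> Z t \<bullet> Z' t \<le> (K - 1 / z t) * (norm (Z t))\<^sup>2"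
  shows "integral {0..s0} (\<lambda>t. (norm (Z t))\<^sup>2 / z t ^ 4) + (norm (Z s0))\<^sup>2 / (theta0 * z s0 ^ 3)
    \<le> (norm (Z 0))\<^sup>2 / (theta0 * z 0 ^ 3)"
proof -
  define h where "h t = (norm (Z t))\<^sup>2 / z t ^ 4" for t
  define F where "F s = integral {0..s} h + (Z s \<bullet> Z s) / (theta0 * z s ^ 3)" for s
  have h_cont: "continuous_on {0..s0} h"
    unfolding h_def using z_pos by (intro continuous_intros Z_cont z_cont) force
  have "F s0 \<le> F 0"
  proof (rule DERIV_nonpos_imp_decreasing_open[OF \<open>0 \<le> s0\<close>])
    show "continuous_on {0..s0} F"
      unfolding F_def using z_pos \<open>theta0 > 0\<close>
      by (intro continuous_intros indefinite_integral_continuous_1 integrable_continuous_real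
          h_cont Z_cont z_cont) force
  next
    fix t assume t: "0 < t" "t < s0"
    define q where "q = Z t \<bullet> Z t"
    define dz where "dz = 2/3 * K * z t - (2 - theta0) / 3"
    have zt: "z t > 0" using z_pos t by auto
    have "((\<lambda>s. integral {0..s} h) has_real_derivative h t) (at t)"
      using integral_has_vector_derivative[OF h_cont, of t] t
      by (simp add: has_real_derivative_iff_has_vector_derivative at_within_Icc_at)
    moreover have "((\<lambda>s. Z s \<bullet> Z s) has_real_derivative 2 * (Z t \<bullet> Z' t)) (at t)"
      using has_derivative_inner[OF Z_deriv[OF t, unfolded has_vector_derivative_def]
          Z_deriv[OF t, unfolded has_vector_derivative_def]]
      unfolding has_field_derivative_def
      by (rule has_derivative_eq_rhs) (auto simp: fun_eq_iff inner_commute algebra_simps)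
    ultimately have "(F has_real_derivative
        h t + 2 * (Z t \<bullet> Z' t) / (theta0 * z t ^ 3) - 3 * q * dz / (theta0 * z t ^ 4)) (at t)"
      unfolding F_def[abs_def] dz_def q_def using zt \<open>theta0 > 0\<close> z_deriv[OF t]
      by (auto intro!: derivative_eq_intros simp: field_simps power_def inner_commute)
    moreover have "h t + 2 * (Z t \<bullet> Z' t) / (theta0 * z t ^ 3) - 3 * q * dz / (theta0 * z t ^ 4) \<le> 0"
    proof -
      have "2 * (Z t \<bullet> Z' t) / (theta0 * z t ^ 3) \<le> 2 * ((K - 1 / z t) * q) / (theta0 * z t ^ 3)"
        using dissipation[OF t] zt \<open>theta0 > 0\<close>
        by (intro divide_right_mono) (auto simp: q_def power2_norm_eq_inner)
      moreover have
        "h t + 2 * ((K - 1 / z t) * q) / (theta0 * z t ^ 3) - 3 * q * dz / (theta0 * z t ^ 4) = 0"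
        using zt \<open>theta0 > 0\<close>
        by (simp add: h_def q_def dz_def power2_norm_eq_inner[symmetric] field_simps power_def)
      ultimately show ?thesis by linarith
    qed
    ultimately show "\<exists>y. (F has_real_derivative y) (at t) \<and> y \<le> 0" by blast
  qed
  then show ?thesis
    unfolding F_def h_def[abs_def] by (simp add: power2_norm_eq_inner)
qed

lemma coupled_difference_energy_estimate:
  fixes b :: "real \<Rightarrow> real^'d \<Rightarrow> real^'d" and u v n :: "real \<Rightarrow> real^'d"
  assumes drift: "H1_drift T K b" and "0 < theta0" "theta0 < 2"
    and u_cont: "continuous_on {0..T} u"
    and u_eq: "\<forall>t\<in>{0..T}. u t = x + integral {0..t} (\<lambda>s. b s (u s)) + n t"
    and v_cont: "continuous_on {0..<T} v"
    and v_eq: "\<forall>t\<in>{0..<T}. v t = y + integral {0..t}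
        (\<lambda>s. b s (v s) + (1 / zeta K theta0 T s) *\<^sub>R (u s - v s)) + n t"
    and s0: "s0 \<in> {0..<T}"
  shows "integral {0..s0} (\<lambda>t. (norm (u t - v t))\<^sup>2 / (zeta K theta0 T t) ^ 4)
      + (norm (u s0 - v s0))\<^sup>2 / (theta0 * (zeta K theta0 T s0) ^ 3)
    \<le> (norm (x - y))\<^sup>2 / (theta0 * (zeta K theta0 T 0) ^ 3)"
proof -
  from drift have "K > 0"
    and Lip: "\<forall>t\<in>{0..T}. \<forall>p q. norm (b t p - b t q) \<le> K * norm (p - q)"
    and Lip_time: "\<forall>p. \<exists>L. \<forall>s\<in>{0..T}. \<forall>t\<in>{0..T}. norm (b t p - b s p) \<le> L * \<bar>t - s\<bar>"
    unfolding H1_drift_def by auto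
  define z where "z = zeta K theta0 T"
  define g\<^sub>1 where "g\<^sub>1 = (\<lambda>s. b s (u s))"
  define g\<^sub>2 where "g\<^sub>2 = (\<lambda>s. b s (v s) + (1 / z s) *\<^sub>R (u s - v s))"
  have sub: "{0..s0} \<subseteq> {0..T}" "{0..s0} \<subseteq> {0..<T}" using s0 by auto
  have z_pos: "z t > 0" if "t \<in> {0..s0}" for t
    unfolding z_def using that s0 \<open>K > 0\<close> \<open>theta0 < 2\<close> by (intro zeta_pos) auto
  have z_cont: "continuous_on {0..s0} z"
    unfolding z_def zeta_def[abs_def] by (intro continuous_intros)
  have u_cont': "continuous_on {0..s0} u" and v_cont': "continuous_on {0..s0} v"
    using u_cont v_cont sub continuous_on_subset by blast+
  have g\<^sub>1_cont: "continuous_on {0..s0} g\<^sub>1"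
    unfolding g\<^sub>1_def by (rule continuous_on_Lipschitz_drift[OF Lip Lip_time sub(1) u_cont'])
  have g\<^sub>2_cont: "continuous_on {0..s0} g\<^sub>2"
    unfolding g\<^sub>2_def using z_pos
    by (intro continuous_intros continuous_on_Lipschitz_drift[OF Lip Lip_time sub(1) v_cont']
        z_cont u_cont' v_cont') force
  have difference_deriv:
    "((\<lambda>s. u s - v s) has_vector_derivative g\<^sub>1 t - g\<^sub>2 t) (at t)" if "0 < t" "t < s0" for t
  proof -
    have "((\<lambda>s. u s - v s) has_vector_derivative g\<^sub>1 t - g\<^sub>2 t) (at t within {0..s0})"
      using u_eq v_eq sub that unfolding g\<^sub>1_def g\<^sub>2_def z_def
      by (intro has_vector_derivative_diff_integral_equations[where n = n, OF g\<^sub>1_cont g\<^sub>2_cont,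
          unfolded g\<^sub>1_def g\<^sub>2_def z_def]) auto
    then show ?thesis using that by (simp add: at_within_Icc_at)
  qed
  have dissipation: "(u t - v t) \<bullet> (g\<^sub>1 t - g\<^sub>2 t) \<le> (K - 1 / z t) * (norm (u t - v t))\<^sup>2"
    if "0 < t" "t < s0" for t
  proof -
    have "(u t - v t) \<bullet> (b t (u t) - b t (v t)) \<le> norm (u t - v t) * norm (b t (u t) - b t (v t))"
      by (rule norm_cauchy_schwarz)
    also have "\<dots> \<le> norm (u t - v t) * (K * norm (u t - v t))"
      using Lip that sub by (intro mult_left_mono) auto
    finally have "(u t - v t) \<bullet> (b t (u t) - b t (v t)) \<le> K * (norm (u t - v t))\<^sup>2"
      by (simp add: power2_eq_square mult.left_commute)
    moreover have "g\<^sub>1 t - g\<^sub>2 t = (b t (u t) - b t (v t)) - (1 / z t) *\<^sub>R (u t - v t)"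
      by (simp add: g\<^sub>1_def g\<^sub>2_def)
    ultimately show ?thesis
      by (simp only: inner_diff_right inner_scaleR_right power2_norm_eq_inner left_diff_distrib)
  qed
  have z_deriv: "(z has_real_derivative 2/3 * K * z t - (2 - theta0) / 3) (at t)" for t
    unfolding z_def using \<open>K > 0\<close> by (intro zeta_has_real_derivative) simp
  have "integral {0..s0} (\<lambda>t. (norm (u t - v t))\<^sup>2 / z t ^ 4) + (norm (u s0 - v s0))\<^sup>2 / (theta0 * z s0 ^ 3)
      \<le> (norm (u 0 - v 0))\<^sup>2 / (theta0 * z 0 ^ 3)"
    using s0 by (intro weighted_energy_decreasing[OF _ \<open>0 < theta0\<close> _ z_cont z_pos difference_deriv
        z_deriv dissipation] continuous_intros u_cont' v_cont') auto
  moreover have "u 0 - v 0 = x - y"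
    using u_eq v_eq s0 by auto
  ultimately show ?thesis unfolding z_def by simp
qed

theorem mainTheorem3:
  fixes M :: "'w measure"
    and T H K Kbar alpha0 theta0 :: real
    and b :: "real \<Rightarrow> real^'d \<Rightarrow> real^'d"
    and \<sigma> :: "real \<Rightarrow> real^'d^'d"
    and N X Y :: "real \<Rightarrow> 'w \<Rightarrow> real^'d"
    and x y :: "real^'d"
  assumes "prob_space M"
    and "T > 0" and "1/2 < H" and "H < 1"
    and "H1_drift T K b"
    and "H1_diffusion T H Kbar alpha0 \<sigma>"
    and "0 < theta0" and "theta0 < 2"
    \<comment> \<open>N t = integral of sigma dB^H over [0,t]: the common additive noise, continuous paths\<close>
    and N_cont: "AE \<omega> in M. continuous_on {0..T} (\<lambda>t. N t \<omega>)"
    and X_sol: "AE \<omega> in M. continuous_on {0..T} (\<lambda>t. X t \<omega>) \<and>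
        (\<forall>t\<in>{0..T}. X t \<omega> = x + integral {0..t} (\<lambda>s. b s (X s \<omega>)) + N t \<omega>)"
    and Y_sol: "AE \<omega> in M. continuous_on {0..<T} (\<lambda>t. Y t \<omega>) \<and>
        (\<forall>t\<in>{0..<T}. Y t \<omega> = y + integral {0..t}
            (\<lambda>s. b s (Y s \<omega>) + (1 / zeta K theta0 T s) *\<^sub>R (X s \<omega> - Y s \<omega>)) + N t \<omega>)"
  shows "AE \<omega> in M. \<forall>s0\<in>{0..<T}.
      integral {0..s0} (\<lambda>t. (norm (X t \<omega> - Y t \<omega>))\<^sup>2 / (zeta K theta0 T t) ^ 4)
      + (norm (X s0 \<omega> - Y s0 \<omega>))\<^sup>2 / (theta0 * (zeta K theta0 T s0) ^ 3)
      \<le> (norm (x - y))\<^sup>2 / (theta0 * (zeta K theta0 T 0) ^ 3)"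
proof -
  have drift: "H1_drift T K b" and "0 < theta0" "theta0 < 2" by fact+
  show ?thesis
    using X_sol Y_sol
  proof eventually_elim
    case (elim \<omega>)
    then show ?case
      using coupled_difference_energy_estimate[OF drift \<open>0 < theta0\<close> \<open>theta0 < 2\<close>,
          where u = "\<lambda>t. X t \<omega>" and v = "\<lambda>t. Y t \<omega>" and n = "\<lambda>t. N t \<omega>"]
      by blast
  qed
qed

end
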